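(* Let $A\subset\mathbb{R}^N$ be nonempty and closed, let $H:[0,\infty)\times\mathbb{R}^N\times\mathbb{R}^N\to\mathbb{R}$, and let $(U,f,l)$ be a triple satisfying $(h)''$ relative to $A$ which is a representation of $H$, i.e. $H(t,x,p)=\sup_{u\in U(t)}\{\langle p,f(t,x,u)\rangle-l(t,x,u)\}$ for all $t,x,p$. Then a function $W:[0,\infty)\times A\to\mathbb{R}\cup\{+\infty\}$ is a weak solution of $-W_t+H(t,x,-W_x)=0$ on $(0,\infty)\times A$ in the sense of Definition I if and only if it is a weak solution in the sense of Definition II.
   Context: $H^*(t,x,v)=\sup_{p}\{\langle v,p\rangle-H(t,x,p)\}$, $\mathrm{dom}\,H^*(t,x,\cdot)=\{v:H^*(t,x,v)<+\infty\}$. $\mathrm{bd}A,\mathrm{int}A$ are boundary and interior. $W$ is viewed as a function on $\mathbb{R}\times\mathbb{R}^N$ equal to $+\infty$ outside $[0,\infty)\times A$; $\mathrm{dom}\,W=\{W<+\infty\}$, $\mathrm{epi}\,W$ its epigraph. For $\varphi:\mathbb{R}^d\to\mathbb{R}\cup\{+\infty\}$ and $z\in\mathrm{dom}\,\varphi$, $\partial\varphi(z)=\{p:\liminf_{y\to z}(\varphi(y)-\varphi(z)-\langle p,y-z\rangle)/|y-z|\ge0\}$. For $C\subset\mathbb{R}^d$, $T_C(z)=\{\zeta:\liminf_{\tau\to0+}\mathrm{dist}(z+\tau\zeta,C)/\tau=0\}$ and $N_C(z)=\{\xi:\langle\zeta,\xi\rangle\le0\ \forall\zeta\in T_C(z)\}$.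 Definition I: a lower semicontinuous $W:[0,\infty)\times A\to\mathbb{R}\cup\{+\infty\}$ is a weak solution if there is a set $C\subset(0,\infty)$ of full measure such that for all $(t,x)\in\mathrm{dom}W\cap(C\times\mathrm{bd}A)$: $-p_t+H(t,x,-p_x)\ge0$ for all $(p_t,p_x)\in\partial W(t,x)$ and $-p_t+\sup_{v\in\mathrm{dom}H^*(t,x,\cdot)}\langle v,-p_x\rangle\ge0$ for all $(p_t,p_x,0)\in N_{\mathrm{epi}W}(t,x,W(t,x))$; and for all $(t,x)\in\mathrm{dom}W\cap(C\times\mathrm{int}A)$ the same two relations hold with equality. Definition II: with $\bar H(t,x,p,q)=\sup_{u\in U(t)}\{\langle p,f(t,x,u)\rangle-q\,l(t,x,u)\}$, a lower semicontinuous $W$ is a weak solution if there is a set $C\subset(0,\infty)$ of full measure such that $-p_t+\bar H(t,x,-p_x,-q)\ge0$ for all $(p_t,p_x,q)\in N_{\mathrm{epi}W}(t,x,W(t,x))$ and all $(t,x)\in\mathrm{dom}W\cap(C\times\mathrm{bd}A)$, and $-p_t+\bar H(t,x,-p_x,-q)=0$ for all such normals and all $(t,x)\in\mathrm{dom}W\cap(C\times\mathrm{int}A)$. Condition $(h)''$ relative to $A$: $U:[0,\infty)\rightsquigarrow\mathbb{R}^M$ measurable with nonempty closed images; $f:[0,\infty)\times\mathbb{R}^N\times\mathbb{R}^M\to\mathbb{R}^N$, $l:[0,\infty)\times\mathbb{R}^N\times\mathbb{R}^M\to\mathbb{R}$ with (h1) measurability in $t$, continuity in $(x,u)$, and $l\ge\phi(t)$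 for some $\phi\in L^1([0,\infty);\mathbb{R})$; (h2) $|f|+|l|\le c(t)(1+|x|)$ on $u\in U(t)$, $c\in L^1_{\rm loc}([0,\infty);[0,\infty))$; (h3) $x\rightsquigarrow(f,l)(t,x,U(t))$ Hausdorff-continuous with closed images; (h4) $\{(f(t,x,u),l(t,x,u)+r):u\in U(t),r\ge0\}$ convex; (h5) $|f|+|l|\le q(t)$ for $x\in\mathrm{bd}A$, $u\in U(t)$; (h6) $|f(t,x,u)-f(t,y,u)|+|l(t,x,u)-l(t,y,u)|\le k(t)|x-y|$ for $u\in U(t)$; here $k,q\in\mathscr{L}_{\rm loc}$, the set of $\varphi\in L^1_{\rm loc}([0,\infty);[0,\infty))$ with $\lim_{\sigma\to0}\sup\{\int_I\varphi: I$ compact interval of length $\le\sigma\}=0$. *)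

theory Defs
  imports "HOL-Analysis.Analysis"
begin

definition ext_fun :: "'a set \<Rightarrow> (real \<times> 'a \<Rightarrow> ereal) \<Rightarrow> real \<times> 'a \<Rightarrow> ereal" where
  "ext_fun A W z = (if 0 \<le> fst z \<and> snd z \<in> A then W z else \<infinity>)"

definition lsc_on :: "'a::topological_space set \<Rightarrow> ('a \<Rightarrow> ereal) \<Rightarrow> bool" where
  "lsc_on S g \<longleftrightarrow> (\<forall>z\<in>S. \<forall>c. c < g z \<longrightarrow> eventually (\<lambda>y. c < g y) (at z within S))"

definition edom :: "('a \<Rightarrow> ereal) \<Rightarrow> 'a set" where
  "edom \<phi> = {z. \<phi> z < \<infinity>}"

definition epi :: "('a \<Rightarrow> ereal) \<Rightarrow> ('a \<times> real) set" where
  "epi \<phi> = {(z, r). \<phi> z \<le> ereal r}"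

definition frechet_subdiff :: "('a::real_inner \<Rightarrow> ereal) \<Rightarrow> 'a \<Rightarrow> 'a set" where
  "frechet_subdiff \<phi> z =
     {p. Liminf (at z) (\<lambda>y. (\<phi> y - \<phi> z - ereal (p \<bullet> (y - z))) / ereal (norm (y - z))) \<ge> 0}"

definition tangent_cone :: "'a::real_normed_vector set \<Rightarrow> 'a \<Rightarrow> 'a set" where
  "tangent_cone C z =
     {\<zeta>. Liminf (at_right (0::real)) (\<lambda>\<tau>. ereal (infdist (z + \<tau> *\<^sub>R \<zeta>) C / \<tau>)) = 0}"

definition normal_cone :: "'a::real_inner set \<Rightarrow> 'a \<Rightarrow> 'a set" where
  "normal_cone C z = {\<xi>. \<forall>\<zeta>\<in>tangent_cone C z. \<zeta> \<bullet> \<xi> \<le> 0}"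

definition conj_H :: "(real \<Rightarrow> 'a \<Rightarrow> 'a \<Rightarrow> real) \<Rightarrow> real \<Rightarrow> 'a \<Rightarrow> 'a::real_inner \<Rightarrow> ereal" where
  "conj_H H t x v = (SUP p. ereal (v \<bullet> p - H t x p))"

definition dom_conj :: "(real \<Rightarrow> 'a \<Rightarrow> 'a \<Rightarrow> real) \<Rightarrow> real \<Rightarrow> 'a::real_inner \<Rightarrow> 'a set" where
  "dom_conj H t x = {v. conj_H H t x v < \<infinity>}"

definition Hbar :: "(real \<Rightarrow> 'b set) \<Rightarrow> (real \<Rightarrow> 'a \<Rightarrow> 'b \<Rightarrow> 'a) \<Rightarrow> (real \<Rightarrow> 'a \<Rightarrow> 'b \<Rightarrow> real)
    \<Rightarrow> real \<Rightarrow> 'a::real_inner \<Rightarrow> 'a \<Rightarrow> real \<Rightarrow> ereal" where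
  "Hbar U f l t x p q = (SUP u\<in>U t. ereal (p \<bullet> f t x u - q * l t x u))"

definition full_measure_pos :: "real set \<Rightarrow> bool" where
  "full_measure_pos C \<longleftrightarrow> C \<subseteq> {0<..} \<and> {0<..} - C \<in> null_sets lebesgue"

definition weak_sol_I :: "'a::euclidean_space set \<Rightarrow> (real \<Rightarrow> 'a \<Rightarrow> 'a \<Rightarrow> real)
    \<Rightarrow> (real \<times> 'a \<Rightarrow> ereal) \<Rightarrow> bool" where
  "weak_sol_I A H W \<longleftrightarrow> lsc_on ({0..} \<times> A) W \<and>
    (\<exists>C. full_measure_pos C \<and>
      (\<forall>t x. (t, x) \<in> edom (ext_fun A W) \<and> t \<in> C \<and> x \<in> frontier A \<longrightarrow>
         (\<forall>pt px. (pt, px) \<in> frechet_subdiff (ext_fun A W) (t, x) \<longrightarrow>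
             - pt + H t x (- px) \<ge> 0) \<and>
         (\<forall>pt px. ((pt, px), 0) \<in> normal_cone (epi (ext_fun A W)) ((t, x), real_of_ereal (W (t, x))) \<longrightarrow>
             ereal (- pt) + (SUP v\<in>dom_conj H t x. ereal (v \<bullet> (- px))) \<ge> 0)) \<and>
      (\<forall>t x. (t, x) \<in> edom (ext_fun A W) \<and> t \<in> C \<and> x \<in> interior A \<longrightarrow>
         (\<forall>pt px. (pt, px) \<in> frechet_subdiff (ext_fun A W) (t, x) \<longrightarrow>
             - pt + H t x (- px) = 0) \<and>
         (\<forall>pt px. ((pt, px), 0) \<in> normal_cone (epi (ext_fun A W)) ((t, x), real_of_ereal (W (t, x))) \<longrightarrow>
             ereal (- pt) + (SUP v\<in>dom_conj H t x. ereal (v \<bullet> (- px))) = 0)))"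

definition weak_sol_II :: "'a::euclidean_space set \<Rightarrow> (real \<Rightarrow> 'b set) \<Rightarrow> (real \<Rightarrow> 'a \<Rightarrow> 'b \<Rightarrow> 'a)
    \<Rightarrow> (real \<Rightarrow> 'a \<Rightarrow> 'b \<Rightarrow> real) \<Rightarrow> (real \<times> 'a \<Rightarrow> ereal) \<Rightarrow> bool" where
  "weak_sol_II A U f l W \<longleftrightarrow> lsc_on ({0..} \<times> A) W \<and>
    (\<exists>C. full_measure_pos C \<and>
      (\<forall>t x. (t, x) \<in> edom (ext_fun A W) \<and> t \<in> C \<and> x \<in> frontier A \<longrightarrow>
         (\<forall>pt px q. ((pt, px), q) \<in> normal_cone (epi (ext_fun A W)) ((t, x), real_of_ereal (W (t, x))) \<longrightarrow>
             ereal (- pt) + Hbar U f l t x (- px) (- q) \<ge> 0)) \<and>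
      (\<forall>t x. (t, x) \<in> edom (ext_fun A W) \<and> t \<in> C \<and> x \<in> interior A \<longrightarrow>
         (\<forall>pt px q. ((pt, px), q) \<in> normal_cone (epi (ext_fun A W)) ((t, x), real_of_ereal (W (t, x))) \<longrightarrow>
             ereal (- pt) + Hbar U f l t x (- px) (- q) = 0)))"

definition Lloc1_nonneg :: "(real \<Rightarrow> real) \<Rightarrow> bool" where
  "Lloc1_nonneg c \<longleftrightarrow> (\<forall>t\<ge>0. 0 \<le> c t) \<and> (\<forall>T. set_integrable lebesgue {0..T} c)"

definition scrL_loc :: "(real \<Rightarrow> real) \<Rightarrow> bool" where
  "scrL_loc k \<longleftrightarrow> Lloc1_nonneg k \<and>
     (\<forall>\<epsilon>>0. \<exists>\<sigma>>0. \<forall>a b. 0 \<le> a \<and> a \<le> b \<and> b - a \<le> \<sigma> \<longrightarrow> (LINT t:{a..b}|lebesgue. k t) \<le> \<epsilon>)"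

text \<open>Hausdorff distance (extended-real valued, so also meaningful for unbounded sets).\<close>
definition hausdorff_dist :: "'a::metric_space set \<Rightarrow> 'a set \<Rightarrow> ereal" where
  "hausdorff_dist S T = max (SUP a\<in>S. ereal (infdist a T)) (SUP b\<in>T. ereal (infdist b S))"

definition measurable_multifun :: "(real \<Rightarrow> 'b::topological_space set) \<Rightarrow> bool" where
  "measurable_multifun U \<longleftrightarrow> (\<forall>G. open G \<longrightarrow> {t\<in>{0..}. U t \<inter> G \<noteq> {}} \<in> sets lebesgue)"

definition cond_h :: "'a::euclidean_space set \<Rightarrow> (real \<Rightarrow> 'b::euclidean_space set)
    \<Rightarrow> (real \<Rightarrow> 'a \<Rightarrow> 'b \<Rightarrow> 'a) \<Rightarrow> (real \<Rightarrow> 'a \<Rightarrow> 'b \<Rightarrow> real) \<Rightarrow> bool" where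
  "cond_h A U f l \<longleftrightarrow>
    measurable_multifun U \<and> (\<forall>t\<ge>0. U t \<noteq> {} \<and> closed (U t)) \<and>
    \<comment> \<open>(h1)\<close>
    (\<forall>x u. set_borel_measurable lebesgue {0..} (\<lambda>t. f t x u)) \<and>
    (\<forall>x u. set_borel_measurable lebesgue {0..} (\<lambda>t. l t x u)) \<and>
    (\<forall>t\<ge>0. continuous_on UNIV (\<lambda>(x, u). f t x u) \<and> continuous_on UNIV (\<lambda>(x, u). l t x u)) \<and>
    (\<exists>\<phi>. set_integrable lebesgue {0..} \<phi> \<and> (\<forall>t\<ge>0. \<forall>x u. \<phi> t \<le> l t x u)) \<and>
    \<comment> \<open>(h2)\<close>
    (\<exists>c. Lloc1_nonneg c \<and>
       (\<forall>t\<ge>0. \<forall>x. \<forall>u\<in>U t. norm (f t x u) + \<bar>l t x u\<bar> \<le> c t * (1 + norm x))) \<and>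
    \<comment> \<open>(h3)\<close>
    (\<forall>t\<ge>0. \<forall>x. closed ((\<lambda>u. (f t x u, l t x u)) ` U t)) \<and>
    (\<forall>t\<ge>0. \<forall>x. \<forall>\<epsilon>>0. \<exists>\<delta>>0. \<forall>y. dist y x < \<delta> \<longrightarrow>
        hausdorff_dist ((\<lambda>u. (f t x u, l t x u)) ` U t) ((\<lambda>u. (f t y u, l t y u)) ` U t) < ereal \<epsilon>) \<and>
    \<comment> \<open>(h4)\<close>
    (\<forall>t\<ge>0. \<forall>x. convex {(f t x u, l t x u + r) | u r. u \<in> U t \<and> 0 \<le> r}) \<and>
    \<comment> \<open>(h5)\<close>
    (\<exists>q. scrL_loc q \<and>
       (\<forall>t\<ge>0. \<forall>x\<in>frontier A. \<forall>u\<in>U t. norm (f t x u) + \<bar>l t x u\<bar> \<le> q t)) \<and>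
    \<comment> \<open>(h6)\<close>
    (\<exists>k. scrL_loc k \<and>
       (\<forall>t\<ge>0. \<forall>x y. \<forall>u\<in>U t.
          norm (f t x u - f t y u) + \<bar>l t x u - l t y u\<bar> \<le> k t * norm (x - y)))"

end

theory Submission
  imports Defs
begin

(*
  Since (0, 1) is
  tangent to an epigraph, every normal (p_t, p_x, q) has q \<le> 0.  If q < 0, dividing by -q gives a
  normal with last component -1, and these are exactly the Frechet subgradients (the converse
  direction uses compactness of the unit sphere); positive homogeneity of Hbar turns
  Hbar(-p_x, -q) into -q H(p_x / q).  If q = 0, Hbar(-p_x, 0) = sup_u <-p_x, f(u)> equals the
  support function of dom H*: every f(u) lies in dom H* because H*(f(u)) \<le> l(u), and if
  <v, p> exceeded sup_u <p, f(u)> then H*(v) \<ge> s (<v, p> - sup_u <p, f(u)>) + inf l for all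
  s \<ge> 0, so v \<notin> dom H*.  The tests "\<ge> 0" and "= 0" are invariant under positive scaling, so
  both definitions impose the same condition at every point.
*)

lemma tangent_cone_iff_frequently:
  fixes C :: "'a::real_normed_vector set"
  shows "\<zeta> \<in> tangent_cone C z \<longleftrightarrow>
    (\<forall>\<epsilon>>0. \<exists>\<^sub>F \<tau> in at_right 0. infdist (z + \<tau> *\<^sub>R \<zeta>) C < \<epsilon> * \<tau>)"
proof -
  define R where "R = (\<lambda>\<tau>. ereal (infdist (z + \<tau> *\<^sub>R \<zeta>) C / \<tau>))"
  have "0 \<le> Liminf (at_right 0) R"
    by (intro Liminf_bounded eventually_mono[OF eventually_at_right_less])
      (simp add: R_def infdist_nonneg)
  then have "\<zeta> \<in> tangent_cone C z \<longleftrightarrow> Liminf (at_right 0) R \<le> 0"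
    by (auto simp: tangent_cone_def R_def)
  also have "\<dots> \<longleftrightarrow> (\<forall>\<epsilon>>0. \<exists>\<^sub>F \<tau> in at_right 0. R \<tau> < ereal \<epsilon>)"
  proof
    assume le: "Liminf (at_right 0) R \<le> 0"
    show "\<forall>\<epsilon>>0. \<exists>\<^sub>F \<tau> in at_right 0. R \<tau> < ereal \<epsilon>"
    proof (intro allI impI, rule ccontr)
      fix \<epsilon> :: real
      assume "0 < \<epsilon>" "\<not> (\<exists>\<^sub>F \<tau> in at_right 0. R \<tau> < ereal \<epsilon>)"
      then have "ereal \<epsilon> \<le> Liminf (at_right 0) R"
        by (intro Liminf_bounded) (simp add: not_frequently not_less)
      from order_trans[OF this le] \<open>0 < \<epsilon>\<close> show False by simp
    qed
  next
    assume freq: "\<forall>\<epsilon>>0. \<exists>\<^sub>F \<tau> in at_right 0. R \<tau> < ereal \<epsilon>"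
    show "Liminf (at_right 0) R \<le> 0"
    proof (rule ccontr)
      assume "\<not> Liminf (at_right 0) R \<le> 0"
      then obtain \<epsilon> where "0 < ereal \<epsilon>" "ereal \<epsilon> < Liminf (at_right 0) R"
        using ereal_dense2[of 0 "Liminf (at_right 0) R"] by (auto simp: not_le)
      then have "0 < \<epsilon>" "\<forall>\<^sub>F \<tau> in at_right 0. ereal \<epsilon> < R \<tau>"
        by (auto intro: less_LiminfD)
      with freq have "\<exists>\<^sub>F \<tau> in at_right 0. R \<tau> < ereal \<epsilon> \<and> ereal \<epsilon> < R \<tau>"
        by (intro frequently_eventually_frequently) auto
      then show False
        by (auto dest: frequently_ex)
    qed
  qed
  also have "\<dots> \<longleftrightarrow> (\<forall>\<epsilon>>0. \<exists>\<^sub>F \<tau> in at_right 0. infdist (z + \<tau> *\<^sub>R \<zeta>) C < \<epsilon> * \<tau>)"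
    by (intro all_cong1 imp_cong refl frequently_cong[OF eventually_at_right_less])
      (simp add: R_def pos_divide_less_eq)
  finally show ?thesis .
qed

lemma infdist_less_iff:
  assumes "C \<noteq> {}"
  shows "infdist x C < e \<longleftrightarrow> (\<exists>c\<in>C. dist x c < e)"
proof -
  have "bdd_below (dist x ` C)"
    by (rule bdd_belowI[of _ 0]) auto
  then show ?thesis
    using assms by (simp add: infdist_notempty cINF_less_iff)
qed

lemma dist_difference_quotient:
  fixes z w \<zeta> :: "'a::real_normed_vector"
  assumes "0 < \<tau>"
  shows "dist ((1 / \<tau>) *\<^sub>R (w - z)) \<zeta> = dist (z + \<tau> *\<^sub>R \<zeta>) w / \<tau>"
proof -
  have "(1 / \<tau>) *\<^sub>R (w - z) - \<zeta> = (1 / \<tau>) *\<^sub>R (w - (z + \<tau> *\<^sub>R \<zeta>))"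
    using assms by (simp add: algebra_simps)
  then show ?thesis
    using assms by (simp add: dist_norm norm_minus_commute)
qed

lemma tangent_coneE_sequentially:
  fixes C :: "'a::real_normed_vector set"
  assumes "\<zeta> \<in> tangent_cone C z" and "C \<noteq> {}"
  obtains \<tau> w where "\<And>k. 0 < \<tau> k" "\<And>k. w k \<in> C" "\<tau> \<longlonglongrightarrow> 0"
    "(\<lambda>k. (1 / \<tau> k) *\<^sub>R (w k - z)) \<longlonglongrightarrow> \<zeta>"
proof -
  define \<delta> :: "nat \<Rightarrow> real" where "\<delta> k = inverse (Suc k)" for k
  have "\<exists>\<tau> w. 0 < \<tau> \<and> \<tau> < \<delta> k \<and> w \<in> C \<and> dist (z + \<tau> *\<^sub>R \<zeta>) w < \<delta> k * \<tau>" for k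
  proof -
    have "\<exists>\<^sub>F \<tau> in at_right 0. infdist (z + \<tau> *\<^sub>R \<zeta>) C < \<delta> k * \<tau>"
      using \<open>\<zeta> \<in> tangent_cone C z\<close> by (simp add: tangent_cone_iff_frequently \<delta>_def)
    moreover have "\<forall>\<^sub>F \<tau> in at_right 0. 0 < \<tau> \<and> \<tau> < \<delta> k"
      unfolding eventually_at_right_field by (rule exI[of _ "\<delta> k"]) (simp add: \<delta>_def)
    ultimately show ?thesis
      by (auto dest!: frequently_ex[OF frequently_eventually_frequently]
          simp: infdist_less_iff[OF \<open>C \<noteq> {}\<close>])
  qed
  then obtain \<tau> w
    where \<tau>w: "\<forall>k. 0 < \<tau> k \<and> \<tau> k < \<delta> k \<and> w k \<in> C \<and> dist (z + \<tau> k *\<^sub>R \<zeta>) (w k) < \<delta> k * \<tau> k"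
    by metis
  have \<delta>_0: "\<delta> \<longlonglongrightarrow> 0"
    unfolding \<delta>_def by (rule LIMSEQ_inverse_real_of_nat)
  have "\<tau> \<longlonglongrightarrow> 0"
    using \<tau>w by (intro Lim_null_comparison[OF always_eventually \<delta>_0]) (simp add: less_imp_le)
  moreover have "(\<lambda>k. (1 / \<tau> k) *\<^sub>R (w k - z) - \<zeta>) \<longlonglongrightarrow> 0"
    using \<tau>w by (intro Lim_null_comparison[OF always_eventually \<delta>_0])
      (simp add: dist_difference_quotient pos_divide_le_eq less_imp_le flip: dist_norm)
  ultimately show ?thesis
    using \<tau>w that by (auto intro: LIM_zero_cancel)
qed

lemma tangent_coneI_sequentially:
  fixes C :: "'a::real_normed_vector set"
  assumes \<tau>_pos: "\<And>k. 0 < \<tau> k" and w: "\<And>k. w k \<in> C" and "\<tau> \<longlonglongrightarrow> 0"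
    and lim: "(\<lambda>k. (1 / \<tau> k) *\<^sub>R (w k - z)) \<longlonglongrightarrow> \<zeta>"
  shows "\<zeta> \<in> tangent_cone C z"
  unfolding tangent_cone_iff_frequently frequently_def
proof (intro allI impI notI)
  fix \<epsilon> :: real
  assume "0 < \<epsilon>" and far: "\<forall>\<^sub>F s in at_right 0. \<not> infdist (z + s *\<^sub>R \<zeta>) C < \<epsilon> * s"
  have "filterlim \<tau> (at_right 0) sequentially"
    using \<open>\<tau> \<longlonglongrightarrow> 0\<close> \<tau>_pos by (intro tendsto_imp_filterlim_at_right) auto
  with far have "\<forall>\<^sub>F k in sequentially. \<not> infdist (z + \<tau> k *\<^sub>R \<zeta>) C < \<epsilon> * \<tau> k"
    by (rule eventually_compose_filterlim)
  moreover have "\<forall>\<^sub>F k in sequentially. dist ((1 / \<tau> k) *\<^sub>R (w k - z)) \<zeta> < \<epsilon>"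
    using lim \<open>0 < \<epsilon>\<close> by (rule tendstoD)
  ultimately have "\<forall>\<^sub>F k in sequentially. False"
  proof (rule eventually_elim2)
    fix k
    show "\<not> infdist (z + \<tau> k *\<^sub>R \<zeta>) C < \<epsilon> * \<tau> k \<Longrightarrow>
        dist ((1 / \<tau> k) *\<^sub>R (w k - z)) \<zeta> < \<epsilon> \<Longrightarrow> False"
      using infdist_le[OF w[of k], of "z + \<tau> k *\<^sub>R \<zeta>"] \<tau>_pos[of k]
      by (simp add: dist_difference_quotient pos_divide_less_eq)
  qed
  then show False by simp
qed

lemma frechet_subdiff_iff:
  fixes \<phi> :: "'a::real_inner \<Rightarrow> ereal"
  assumes \<phi>z: "\<phi> z = ereal a"
  shows "p \<in> frechet_subdiff \<phi> z \<longleftrightarrow>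
    (\<forall>\<epsilon>>0. \<forall>\<^sub>F y in at z. ereal (a + p \<bullet> (y - z) - \<epsilon> * norm (y - z)) < \<phi> y)"
proof -
  define g where "g = (\<lambda>y. (\<phi> y - \<phi> z - ereal (p \<bullet> (y - z))) / ereal (norm (y - z)))"
  have g_less_iff: "ereal (- \<epsilon>) < g y \<longleftrightarrow> ereal (a + p \<bullet> (y - z) - \<epsilon> * norm (y - z)) < \<phi> y"
    if "y \<noteq> z" for y \<epsilon>
  proof -
    have "ereal (- \<epsilon>) < g y \<longleftrightarrow>
        ereal (norm (y - z)) * ereal (- \<epsilon>) < \<phi> y - ereal a - ereal (p \<bullet> (y - z))"
      using that by (simp add: g_def \<phi>z ereal_less_divide_pos)
    also have "\<dots> \<longleftrightarrow> ereal (a + p \<bullet> (y - z) - \<epsilon> * norm (y - z)) < \<phi> y"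
      by (cases "\<phi> y") (simp_all add: algebra_simps)
    finally show ?thesis .
  qed
  have "p \<in> frechet_subdiff \<phi> z \<longleftrightarrow> (\<forall>c<0. \<forall>\<^sub>F y in at z. c < g y)"
    by (simp add: frechet_subdiff_def le_Liminf_iff g_def)
  also have "\<dots> \<longleftrightarrow> (\<forall>\<epsilon>>0. \<forall>\<^sub>F y in at z. ereal (- \<epsilon>) < g y)"
  proof (intro iffI allI impI)
    fix c :: ereal
    assume "\<forall>\<epsilon>>0. \<forall>\<^sub>F y in at z. ereal (- \<epsilon>) < g y" and "c < 0"
    moreover obtain \<epsilon> where "0 < \<epsilon>" "c \<le> ereal (- \<epsilon>)"
      using \<open>c < 0\<close> by (cases c) (auto intro: that[of 1] that[of "- real_of_ereal c"])
    ultimately show "\<forall>\<^sub>F y in at z. c < g y"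
      by (metis (mono_tags, lifting) eventually_mono order.strict_trans1)
  qed simp
  also have "\<dots> \<longleftrightarrow> (\<forall>\<epsilon>>0. \<forall>\<^sub>F y in at z. ereal (a + p \<bullet> (y - z) - \<epsilon> * norm (y - z)) < \<phi> y)"
    using g_less_iff by (intro all_cong1 imp_cong refl eventually_cong[OF eventually_neq_at_within]) auto
  finally show ?thesis .
qed

lemma mem_epi_iff [simp]: "(z, r) \<in> epi \<phi> \<longleftrightarrow> \<phi> z \<le> ereal r"
  by (simp add: epi_def)

lemma frechet_subdiff_epi_above:
  fixes \<phi> :: "'a::real_inner \<Rightarrow> ereal"
  assumes \<phi>z: "\<phi> z = ereal a" and "p \<in> frechet_subdiff \<phi> z" and "0 < \<epsilon>"
  shows "\<forall>\<^sub>F y in nhds z. \<forall>r. \<phi> y \<le> ereal r \<longrightarrow> a + p \<bullet> (y - z) - \<epsilon> * norm (y - z) \<le> r"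
proof -
  have "\<forall>\<^sub>F y in nhds z. y \<noteq> z \<longrightarrow> ereal (a + p \<bullet> (y - z) - \<epsilon> * norm (y - z)) < \<phi> y"
    using assms by (simp add: frechet_subdiff_iff[where \<phi>=\<phi> and z=z, OF \<phi>z] eventually_at_filter)
  then show ?thesis
  proof (rule eventually_mono, intro allI impI)
    fix y r
    assume "y \<noteq> z \<longrightarrow> ereal (a + p \<bullet> (y - z) - \<epsilon> * norm (y - z)) < \<phi> y" and "\<phi> y \<le> ereal r"
    then have "ereal (a + p \<bullet> (y - z) - \<epsilon> * norm (y - z)) \<le> \<phi> y"
      using \<phi>z by (cases "y = z") auto
    from order_trans[OF this \<open>\<phi> y \<le> ereal r\<close>]
    show "a + p \<bullet> (y - z) - \<epsilon> * norm (y - z) \<le> r"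
      by simp
  qed
qed

lemma frechet_subdiff_tangent_cone_epi_le:
  fixes \<phi> :: "'a::real_inner \<Rightarrow> ereal"
  assumes \<phi>z: "\<phi> z = ereal a" and p: "p \<in> frechet_subdiff \<phi> z"
    and tangent: "(\<zeta>, \<eta>) \<in> tangent_cone (epi \<phi>) (z, a)" and "0 < \<epsilon>"
  shows "p \<bullet> \<zeta> - \<epsilon> * norm \<zeta> \<le> \<eta>"
proof -
  have "(z, a) \<in> epi \<phi>"
    using \<phi>z by simp
  then have "epi \<phi> \<noteq> {}"
    by blast
  with tangent obtain \<tau> w where \<tau>w: "\<And>k. 0 < \<tau> k" "\<And>k. w k \<in> epi \<phi>" "\<tau> \<longlonglongrightarrow> 0"
    and lim: "(\<lambda>k. (1 / \<tau> k) *\<^sub>R (w k - (z, a))) \<longlonglongrightarrow> (\<zeta>, \<eta>)"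
    by (rule tangent_coneE_sequentially) blast
  define d where "d = (\<lambda>k. (1 / \<tau> k) *\<^sub>R (fst (w k) - z))"
  define e where "e = (\<lambda>k. (snd (w k) - a) / \<tau> k)"
  have d: "d \<longlonglongrightarrow> \<zeta>" and e: "e \<longlonglongrightarrow> \<eta>"
    using tendsto_fst[OF lim] tendsto_snd[OF lim] by (simp_all add: d_def e_def)
  have fst_w: "fst (w k) = z + \<tau> k *\<^sub>R d k" for k
    using \<tau>w(1)[of k] by (simp add: d_def)
  have "(\<lambda>k. fst (w k)) \<longlonglongrightarrow> z + 0 *\<^sub>R \<zeta>"
    unfolding fst_w by (intro tendsto_intros \<tau>w(3) d)
  then have "\<forall>\<^sub>F k in sequentially. \<forall>r. \<phi> (fst (w k)) \<le> ereal r \<longrightarrow>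
      a + p \<bullet> (fst (w k) - z) - \<epsilon> * norm (fst (w k) - z) \<le> r"
    using frechet_subdiff_epi_above[OF \<phi>z p \<open>0 < \<epsilon>\<close>]
    by (intro eventually_compose_filterlim[where f="\<lambda>k. fst (w k)"]) simp_all
  moreover have "\<phi> (fst (w k)) \<le> ereal (snd (w k))" for k
    using \<tau>w(2)[of k] by (cases "w k") simp
  ultimately have "\<forall>\<^sub>F k in sequentially. a + p \<bullet> (fst (w k) - z) - \<epsilon> * norm (fst (w k) - z) \<le> snd (w k)"
    by (auto elim: eventually_mono)
  then have "\<forall>\<^sub>F k in sequentially. p \<bullet> d k - \<epsilon> * norm (d k) \<le> e k"
  proof (rule eventually_mono)
    fix k
    assume "a + p \<bullet> (fst (w k) - z) - \<epsilon> * norm (fst (w k) - z) \<le> snd (w k)"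
    then have "\<tau> k * (p \<bullet> d k - \<epsilon> * norm (d k)) \<le> snd (w k) - a"
      using \<tau>w(1)[of k] by (simp add: fst_w algebra_simps)
    then show "p \<bullet> d k - \<epsilon> * norm (d k) \<le> e k"
      using \<tau>w(1)[of k] by (simp add: e_def pos_le_divide_eq mult.commute)
  qed
  moreover have "(\<lambda>k. p \<bullet> d k - \<epsilon> * norm (d k)) \<longlonglongrightarrow> p \<bullet> \<zeta> - \<epsilon> * norm \<zeta>"
    by (intro tendsto_intros d)
  ultimately show ?thesis
    using tendsto_le[OF trivial_limit_sequentially e] by blast
qed

lemma frechet_subdiff_imp_normal_cone_epi:
  fixes \<phi> :: "'a::real_inner \<Rightarrow> ereal"
  assumes \<phi>z: "\<phi> z = ereal a" and p: "p \<in> frechet_subdiff \<phi> z"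
  shows "(p, -1) \<in> normal_cone (epi \<phi>) (z, a)"
  unfolding normal_cone_def
proof (clarify)
  fix \<zeta> \<eta>
  assume tangent: "(\<zeta>, \<eta>) \<in> tangent_cone (epi \<phi>) (z, a)"
  have "\<zeta> \<bullet> p \<le> \<eta>"
  proof (rule field_le_epsilon)
    fix \<delta> :: real
    assume "0 < \<delta>"
    then have "p \<bullet> \<zeta> - \<delta> / (norm \<zeta> + 1) * norm \<zeta> \<le> \<eta>"
      by (intro frechet_subdiff_tangent_cone_epi_le[OF \<phi>z p tangent]) (simp add: add_nonneg_pos)
    moreover have "\<delta> / (norm \<zeta> + 1) * norm \<zeta> \<le> \<delta>"
      using \<open>0 < \<delta>\<close> by (simp add: pos_divide_le_eq add_nonneg_pos)
    ultimately show "\<zeta> \<bullet> p \<le> \<eta> + \<delta>"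
      by (simp add: inner_commute)
  qed
  then show "(\<zeta>, \<eta>) \<bullet> (p, -1) \<le> 0"
    by (simp add: inner_Pair)
qed

lemma not_eventually_at_imp_seq:
  fixes z :: "'a::first_countable_topology"
  assumes "\<not> eventually P (at z)"
  obtains Y where "\<And>k. Y k \<noteq> z" "Y \<longlonglongrightarrow> z" "\<And>k. \<not> P (Y k)"
proof -
  obtain f where f: "\<forall>n. f n \<noteq> z" "f \<longlonglongrightarrow> z" "\<not> eventually (\<lambda>n. P (f n)) sequentially"
    using assms sequentially_imp_eventually_at by blast
  obtain r :: "nat \<Rightarrow> nat" where "strict_mono r" "\<forall>n. \<not> P (f (r n))"
    using not_eventually_sequentiallyD[OF f(3)] by auto
  with f show ?thesis
    using that[of "f \<circ> r"] LIMSEQ_subseq_LIMSEQ[OF f(2)] by auto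
qed

lemma not_frechet_subdiff_imp_tangent_cone_epi:
  fixes \<phi> :: "'a::euclidean_space \<Rightarrow> ereal"
  assumes \<phi>z: "\<phi> z = ereal a" and "p \<notin> frechet_subdiff \<phi> z"
  obtains d \<epsilon> where "0 < \<epsilon>" "(d, p \<bullet> d - \<epsilon>) \<in> tangent_cone (epi \<phi>) (z, a)"
proof -
  obtain \<epsilon> where "0 < \<epsilon>"
    and not_ev: "\<not> (\<forall>\<^sub>F y in at z. ereal (a + p \<bullet> (y - z) - \<epsilon> * norm (y - z)) < \<phi> y)"
    using \<open>p \<notin> frechet_subdiff \<phi> z\<close> by (auto simp: frechet_subdiff_iff[where \<phi>=\<phi> and z=z, OF \<phi>z])
  obtain Y where Y: "\<And>k. Y k \<noteq> z" "Y \<longlonglongrightarrow> z"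
    and "\<And>k. \<not> ereal (a + p \<bullet> (Y k - z) - \<epsilon> * norm (Y k - z)) < \<phi> (Y k)"
    using not_eventually_at_imp_seq[OF not_ev] by blast
  then have below: "\<phi> (Y k) \<le> ereal (a + p \<bullet> (Y k - z) - \<epsilon> * norm (Y k - z))" for k
    by (simp add: not_less)
  define \<tau> where "\<tau> = (\<lambda>k. norm (Y k - z))"
  define d where "d = (\<lambda>k. (1 / \<tau> k) *\<^sub>R (Y k - z))"
  have \<tau>_pos: "0 < \<tau> k" for k
    using Y(1) by (simp add: \<tau>_def)
  have "\<forall>k. d k \<in> sphere 0 1"
    using \<tau>_pos by (simp add: d_def \<tau>_def)
  then obtain dd r where r: "strict_mono r" and "(d \<circ> r) \<longlonglongrightarrow> dd"
    using seq_compactE[OF compact_imp_seq_compact[OF compact_sphere]] by metis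
  define w where "w = (\<lambda>k. (Y (r k), a + p \<bullet> (Y (r k) - z) - \<epsilon> * \<tau> (r k)))"
  have "(1 / (\<tau> \<circ> r) k) *\<^sub>R (w k - (z, a)) = (d (r k), p \<bullet> d (r k) - \<epsilon>)" for k
    using \<tau>_pos[of "r k"] by (simp add: w_def d_def algebra_simps)
  moreover have "(\<lambda>k. (d (r k), p \<bullet> d (r k) - \<epsilon>)) \<longlonglongrightarrow> (dd, p \<bullet> dd - \<epsilon>)"
    using \<open>(d \<circ> r) \<longlonglongrightarrow> dd\<close> by (intro tendsto_intros) (simp_all add: comp_def)
  moreover have "\<tau> \<longlonglongrightarrow> 0"
    unfolding \<tau>_def using tendsto_norm_zero[OF LIM_zero[OF Y(2)]] .
  ultimately have "(dd, p \<bullet> dd - \<epsilon>) \<in> tangent_cone (epi \<phi>) (z, a)"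
    using \<tau>_pos below LIMSEQ_subseq_LIMSEQ[OF _ r]
    by (intro tangent_coneI_sequentially[of "\<tau> \<circ> r" w]) (simp_all add: w_def \<tau>_def)
  with \<open>0 < \<epsilon>\<close> show ?thesis
    using that by blast
qed

lemma normal_cone_epi_imp_frechet_subdiff:
  fixes \<phi> :: "'a::euclidean_space \<Rightarrow> ereal"
  assumes \<phi>z: "\<phi> z = ereal a" and normal: "(p, -1) \<in> normal_cone (epi \<phi>) (z, a)"
  shows "p \<in> frechet_subdiff \<phi> z"
proof (rule ccontr)
  assume "p \<notin> frechet_subdiff \<phi> z"
  then obtain d \<epsilon> where "0 < \<epsilon>" "(d, p \<bullet> d - \<epsilon>) \<in> tangent_cone (epi \<phi>) (z, a)"
    by (rule not_frechet_subdiff_imp_tangent_cone_epi[where \<phi>=\<phi> and z=z, OF \<phi>z])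
  with normal have "(d, p \<bullet> d - \<epsilon>) \<bullet> (p, -1) \<le> 0"
    unfolding normal_cone_def by blast
  with \<open>0 < \<epsilon>\<close> show False
    by (simp add: inner_Pair inner_commute)
qed

lemma normal_cone_scaleR:
  assumes "\<xi> \<in> normal_cone C z" and "0 \<le> c"
  shows "c *\<^sub>R \<xi> \<in> normal_cone C z"
  using assms by (auto simp: normal_cone_def mult_nonneg_nonpos)

lemma normal_cone_epi_snd_nonpos:
  fixes \<phi> :: "'a::real_inner \<Rightarrow> ereal"
  assumes \<phi>z: "\<phi> z = ereal a" and normal: "(w, q) \<in> normal_cone (epi \<phi>) (z, a)"
  shows "q \<le> 0"
proof -
  define \<tau> :: "nat \<Rightarrow> real" where "\<tau> = (\<lambda>k. inverse (Suc k))"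
  define y where "y = (\<lambda>k. (z, a + \<tau> k))"
  have "\<forall>k. 0 < \<tau> k \<and> y k \<in> epi \<phi>"
    using \<phi>z by (simp add: \<tau>_def y_def)
  moreover have "\<tau> \<longlonglongrightarrow> 0"
    unfolding \<tau>_def by (rule LIMSEQ_inverse_real_of_nat)
  moreover have "(\<lambda>k. (1 / \<tau> k) *\<^sub>R (y k - (z, a))) \<longlonglongrightarrow> (0, 1)"
    by (simp add: \<tau>_def y_def)
  ultimately have "(0, 1) \<in> tangent_cone (epi \<phi>) (z, a)"
    by (intro tangent_coneI_sequentially) auto
  with normal have "(0, 1) \<bullet> (w, q) \<le> 0"
    unfolding normal_cone_def by blast
  then show ?thesis
    by (simp add: inner_Pair)
qed

definition representation_at ::
    "(real \<Rightarrow> 'b set) \<Rightarrow> (real \<Rightarrow> 'a \<Rightarrow> 'b \<Rightarrow> 'a) \<Rightarrow> (real \<Rightarrow> 'a \<Rightarrow> 'b \<Rightarrow> real)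
      \<Rightarrow> (real \<Rightarrow> 'a \<Rightarrow> 'a \<Rightarrow> real) \<Rightarrow> real \<Rightarrow> 'a::real_inner \<Rightarrow> bool"
  where "representation_at U f l H t x \<longleftrightarrow>
    (\<forall>p. ereal (H t x p) = (SUP u\<in>U t. ereal (p \<bullet> f t x u - l t x u)))"

lemma representation_atD:
  "representation_at U f l H t x \<Longrightarrow> ereal (H t x p) = (SUP u\<in>U t. ereal (p \<bullet> f t x u - l t x u))"
  by (simp add: representation_at_def)

lemma Hbar_pos_scale:
  assumes Hrep: "representation_at U f l H t x"
    and "U t \<noteq> {}" and "0 < s"
  shows "Hbar U f l t x w s = ereal (s * H t x ((1 / s) *\<^sub>R w))"
proof -
  have "Hbar U f l t x w s = (SUP u\<in>U t. ereal s * ereal (((1 / s) *\<^sub>R w) \<bullet> f t x u - l t x u))"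
    unfolding Hbar_def using \<open>0 < s\<close> by (intro SUP_cong refl) (simp add: algebra_simps)
  also have "\<dots> = ereal s * (SUP u\<in>U t. ereal (((1 / s) *\<^sub>R w) \<bullet> f t x u - l t x u))"
    using Sup_ereal_mult_left'[OF \<open>U t \<noteq> {}\<close>] \<open>0 < s\<close> by simp
  also have "\<dots> = ereal s * ereal (H t x ((1 / s) *\<^sub>R w))"
    by (simp only: representation_atD[OF Hrep])
  finally show ?thesis
    by simp
qed

lemma conj_H_f_le_l:
  assumes Hrep: "representation_at U f l H t x"
    and "u \<in> U t"
  shows "conj_H H t x (f t x u) \<le> ereal (l t x u)"
  unfolding conj_H_def
proof (rule SUP_least)
  fix p
  have "ereal (p \<bullet> f t x u - l t x u) \<le> ereal (H t x p)"
    unfolding representation_atD[OF Hrep] using \<open>u \<in> U t\<close> by (rule SUP_upper)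
  then show "ereal (f t x u \<bullet> p - H t x p) \<le> ereal (l t x u)"
    by (simp add: inner_commute)
qed

lemma bounded_linear_growth_nonpos:
  fixes c K :: real
  assumes "\<And>s. 0 \<le> s \<Longrightarrow> s * c \<le> K"
  shows "c \<le> 0"
proof (rule ccontr)
  assume "\<not> c \<le> 0"
  then have "0 \<le> (\<bar>K\<bar> + 1) / c" and "(\<bar>K\<bar> + 1) / c * c = \<bar>K\<bar> + 1"
    by auto
  with assms show False
    by (smt (verit))
qed

lemma conj_H_not_MInfty: "conj_H H t x v \<noteq> - \<infinity>"
proof -
  have "ereal (v \<bullet> 0 - H t x 0) \<le> conj_H H t x v"
    unfolding conj_H_def by (rule SUP_upper) simp
  then show ?thesis
    by auto
qed

lemma H_scaleR_le:
  assumes Hrep: "representation_at U f l H t x"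
    and lower: "\<And>u. u \<in> U t \<Longrightarrow> L \<le> l t x u"
    and upper: "\<And>u. u \<in> U t \<Longrightarrow> p \<bullet> f t x u \<le> m" and "0 \<le> s"
  shows "H t x (s *\<^sub>R p) \<le> s * m - L"
proof -
  have "ereal (H t x (s *\<^sub>R p)) \<le> ereal (s * m - L)"
    unfolding representation_atD[OF Hrep]
  proof (rule SUP_least)
    fix u
    assume "u \<in> U t"
    have "s * (p \<bullet> f t x u) \<le> s * m"
      using upper[OF \<open>u \<in> U t\<close>] \<open>0 \<le> s\<close> by (rule mult_left_mono)
    with lower[OF \<open>u \<in> U t\<close>] show "ereal ((s *\<^sub>R p) \<bullet> f t x u - l t x u) \<le> ereal (s * m - L)"
      by simp
  qed
  then show ?thesis
    by simp
qed

lemma dom_conj_inner_le_SUP: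
  assumes Hrep: "representation_at U f l H t x"
    and "U t \<noteq> {}" and lower: "\<And>u. u \<in> U t \<Longrightarrow> L \<le> l t x u"
    and "v \<in> dom_conj H t x"
  shows "ereal (v \<bullet> p) \<le> (SUP u\<in>U t. ereal (p \<bullet> f t x u))" (is "_ \<le> ?M")
proof (cases ?M)
  case (real m)
  have upper: "p \<bullet> f t x u \<le> m" if "u \<in> U t" for u
    using SUP_upper[OF that, of "\<lambda>u. ereal (p \<bullet> f t x u)"] real by simp
  obtain B where B: "conj_H H t x v = ereal B"
    using \<open>v \<in> dom_conj H t x\<close> conj_H_not_MInfty
    by (cases "conj_H H t x v") (auto simp: dom_conj_def)
  have "s * (v \<bullet> p - m) \<le> B - L" if "0 \<le> s" for s
  proof -
    have "ereal (v \<bullet> (s *\<^sub>R p) - H t x (s *\<^sub>R p)) \<le> ereal B"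
      unfolding B[symmetric] conj_H_def by (rule SUP_upper) simp
    then show ?thesis
      using H_scaleR_le[OF Hrep lower upper that]
      by (simp add: algebra_simps)
  qed
  then have "v \<bullet> p - m \<le> 0"
    by (rule bounded_linear_growth_nonpos)
  then show ?thesis
    using real by simp
next
  case MInf
  moreover obtain u where "u \<in> U t"
    using \<open>U t \<noteq> {}\<close> by blast
  ultimately show ?thesis
    using SUP_upper[of u "U t" "\<lambda>u. ereal (p \<bullet> f t x u)"] by simp
qed simp

lemma Hbar_zero_eq_SUP_dom_conj:
  assumes Hrep: "representation_at U f l H t x"
    and "U t \<noteq> {}" and lower: "\<And>u. u \<in> U t \<Longrightarrow> L \<le> l t x u"
  shows "Hbar U f l t x p 0 = (SUP v\<in>dom_conj H t x. ereal (v \<bullet> p))"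
proof -
  have "Hbar U f l t x p 0 = (SUP u\<in>U t. ereal (p \<bullet> f t x u))"
    by (simp add: Hbar_def)
  also have "\<dots> = (SUP v\<in>dom_conj H t x. ereal (v \<bullet> p))"
  proof (rule antisym)
    show "(SUP u\<in>U t. ereal (p \<bullet> f t x u)) \<le> (SUP v\<in>dom_conj H t x. ereal (v \<bullet> p))"
    proof (rule SUP_least)
      fix u
      assume "u \<in> U t"
      then have "f t x u \<in> dom_conj H t x"
        using conj_H_f_le_l[OF Hrep] by (force simp: dom_conj_def)
      then have "ereal (f t x u \<bullet> p) \<le> (SUP v\<in>dom_conj H t x. ereal (v \<bullet> p))"
        by (rule SUP_upper)
      then show "ereal (p \<bullet> f t x u) \<le> (SUP v\<in>dom_conj H t x. ereal (v \<bullet> p))"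
        by (simp add: inner_commute)
    qed
    show "(SUP v\<in>dom_conj H t x. ereal (v \<bullet> p)) \<le> (SUP u\<in>U t. ereal (p \<bullet> f t x u))"
      using dom_conj_inner_le_SUP[OF Hrep \<open>U t \<noteq> {}\<close> lower] by (rule SUP_least)
  qed
  finally show ?thesis .
qed

definition weak_sol_I_at ::
    "(ereal \<Rightarrow> bool) \<Rightarrow> (real \<Rightarrow> 'a \<Rightarrow> 'a \<Rightarrow> real) \<Rightarrow> (real \<times> 'a \<Rightarrow> ereal) \<Rightarrow> real \<Rightarrow> 'a::real_inner \<Rightarrow> real \<Rightarrow> bool"
  where "weak_sol_I_at P H \<phi> t x a \<longleftrightarrow>
    (\<forall>pt px. (pt, px) \<in> frechet_subdiff \<phi> (t, x) \<longrightarrow> P (ereal (- pt + H t x (- px)))) \<and>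
    (\<forall>pt px. ((pt, px), 0) \<in> normal_cone (epi \<phi>) ((t, x), a) \<longrightarrow>
       P (ereal (- pt) + (SUP v\<in>dom_conj H t x. ereal (v \<bullet> (- px)))))"

definition weak_sol_II_at ::
    "(ereal \<Rightarrow> bool) \<Rightarrow> (real \<Rightarrow> 'b set) \<Rightarrow> (real \<Rightarrow> 'a \<Rightarrow> 'b \<Rightarrow> 'a) \<Rightarrow> (real \<Rightarrow> 'a \<Rightarrow> 'b \<Rightarrow> real)
      \<Rightarrow> (real \<times> 'a \<Rightarrow> ereal) \<Rightarrow> real \<Rightarrow> 'a::real_inner \<Rightarrow> real \<Rightarrow> bool"
  where "weak_sol_II_at P U f l \<phi> t x a \<longleftrightarrow>
    (\<forall>pt px q. ((pt, px), q) \<in> normal_cone (epi \<phi>) ((t, x), a) \<longrightarrow>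
       P (ereal (- pt) + Hbar U f l t x (- px) (- q)))"

lemma weak_sol_I_iff_at:
  "weak_sol_I A H W \<longleftrightarrow> lsc_on ({0..} \<times> A) W \<and>
    (\<exists>C. full_measure_pos C \<and>
      (\<forall>t x. (t, x) \<in> edom (ext_fun A W) \<and> t \<in> C \<and> x \<in> frontier A \<longrightarrow>
         weak_sol_I_at (\<lambda>r. 0 \<le> r) H (ext_fun A W) t x (real_of_ereal (W (t, x)))) \<and>
      (\<forall>t x. (t, x) \<in> edom (ext_fun A W) \<and> t \<in> C \<and> x \<in> interior A \<longrightarrow>
         weak_sol_I_at (\<lambda>r. r = 0) H (ext_fun A W) t x (real_of_ereal (W (t, x)))))"
  by (simp add: weak_sol_I_def weak_sol_I_at_def)

lemma weak_sol_II_iff_at: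
  "weak_sol_II A U f l W \<longleftrightarrow> lsc_on ({0..} \<times> A) W \<and>
    (\<exists>C. full_measure_pos C \<and>
      (\<forall>t x. (t, x) \<in> edom (ext_fun A W) \<and> t \<in> C \<and> x \<in> frontier A \<longrightarrow>
         weak_sol_II_at (\<lambda>r. 0 \<le> r) U f l (ext_fun A W) t x (real_of_ereal (W (t, x)))) \<and>
      (\<forall>t x. (t, x) \<in> edom (ext_fun A W) \<and> t \<in> C \<and> x \<in> interior A \<longrightarrow>
         weak_sol_II_at (\<lambda>r. r = 0) U f l (ext_fun A W) t x (real_of_ereal (W (t, x)))))"
  by (simp add: weak_sol_II_def weak_sol_II_at_def)

lemma weak_sol_I_at_imp_weak_sol_II_at:
  fixes \<phi> :: "real \<times> 'a::euclidean_space \<Rightarrow> ereal"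
  assumes \<phi>: "\<phi> (t, x) = ereal a"
    and Hrep: "representation_at U f l H t x"
    and U: "U t \<noteq> {}" and lower: "\<And>u. u \<in> U t \<Longrightarrow> L \<le> l t x u"
    and hom: "\<And>s r. 0 < s \<Longrightarrow> P (ereal (s * r)) \<longleftrightarrow> P (ereal r)"
    and I: "weak_sol_I_at P H \<phi> t x a"
  shows "weak_sol_II_at P U f l \<phi> t x a"
  unfolding weak_sol_II_at_def
proof (intro allI impI)
  fix pt px q
  assume normal: "((pt, px), q) \<in> normal_cone (epi \<phi>) ((t, x), a)"
  have "q \<le> 0"
    using normal_cone_epi_snd_nonpos[where \<phi>=\<phi> and z="(t, x)", OF \<phi> normal] .
  show "P (ereal (- pt) + Hbar U f l t x (- px) (- q))"
  proof (cases "q = 0")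
    case True
    with I normal show ?thesis
      by (simp add: weak_sol_I_at_def
          Hbar_zero_eq_SUP_dom_conj[OF Hrep U lower])
  next
    case False
    define s where "s = - q"
    with False \<open>q \<le> 0\<close> have "0 < s" by simp
    have "((pt / s, (1 / s) *\<^sub>R px), - 1) \<in> normal_cone (epi \<phi>) ((t, x), a)"
      using normal_cone_scaleR[OF normal, of "1 / s"] \<open>0 < s\<close> by (simp add: s_def)
    then have "(pt / s, (1 / s) *\<^sub>R px) \<in> frechet_subdiff \<phi> (t, x)"
      by (rule normal_cone_epi_imp_frechet_subdiff[where \<phi>=\<phi> and z="(t, x)", OF \<phi>])
    with I have "P (ereal (- (pt / s) + H t x (- ((1 / s) *\<^sub>R px))))"
      unfolding weak_sol_I_at_def by blast
    moreover have "ereal (- pt) + Hbar U f l t x (- px) s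
        = ereal (s * (- (pt / s) + H t x (- ((1 / s) *\<^sub>R px))))"
      using Hbar_pos_scale[OF Hrep U \<open>0 < s\<close>] \<open>0 < s\<close>
      by (simp add: algebra_simps)
    ultimately show ?thesis
      using hom[OF \<open>0 < s\<close>] by (simp add: s_def)
  qed
qed

lemma weak_sol_II_at_imp_weak_sol_I_at:
  fixes \<phi> :: "real \<times> 'a::euclidean_space \<Rightarrow> ereal"
  assumes \<phi>: "\<phi> (t, x) = ereal a"
    and Hrep: "representation_at U f l H t x"
    and U: "U t \<noteq> {}" and lower: "\<And>u. u \<in> U t \<Longrightarrow> L \<le> l t x u"
    and II: "weak_sol_II_at P U f l \<phi> t x a"
  shows "weak_sol_I_at P H \<phi> t x a"
  unfolding weak_sol_I_at_def
proof (intro conjI allI impI)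
  fix pt px
  assume "(pt, px) \<in> frechet_subdiff \<phi> (t, x)"
  then have "((pt, px), - 1) \<in> normal_cone (epi \<phi>) ((t, x), a)"
    by (rule frechet_subdiff_imp_normal_cone_epi[where \<phi>=\<phi> and z="(t, x)", OF \<phi>])
  with II have "P (ereal (- pt) + Hbar U f l t x (- px) (- (- 1)))"
    unfolding weak_sol_II_at_def by blast
  moreover have "Hbar U f l t x (- px) (- (- 1)) = ereal (H t x (- px))"
    using Hbar_pos_scale[OF Hrep U, of 1] by simp
  ultimately show "P (ereal (- pt + H t x (- px)))"
    by simp
next
  fix pt px
  assume "((pt, px), 0) \<in> normal_cone (epi \<phi>) ((t, x), a)"
  with II have "P (ereal (- pt) + Hbar U f l t x (- px) (- 0))"
    unfolding weak_sol_II_at_def by blast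
  then show "P (ereal (- pt) + (SUP v\<in>dom_conj H t x. ereal (v \<bullet> (- px))))"
    by (simp add: Hbar_zero_eq_SUP_dom_conj[OF Hrep U lower])
qed

lemma weak_sol_I_at_iff_weak_sol_II_at:
  fixes \<phi> :: "real \<times> 'a::euclidean_space \<Rightarrow> ereal"
  assumes "\<phi> (t, x) = ereal a" and "representation_at U f l H t x"
    and "U t \<noteq> {}" and "\<And>u. u \<in> U t \<Longrightarrow> L \<le> l t x u"
    and "\<And>s r. 0 < s \<Longrightarrow> P (ereal (s * r)) \<longleftrightarrow> P (ereal r)"
  shows "weak_sol_I_at P H \<phi> t x a \<longleftrightarrow> weak_sol_II_at P U f l \<phi> t x a"
  using weak_sol_I_at_imp_weak_sol_II_at[where \<phi>=\<phi>, OF assms]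
    weak_sol_II_at_imp_weak_sol_I_at[where \<phi>=\<phi>, OF assms(1-4)]
  by blast

lemma cond_hD:
  assumes "cond_h A U f l" and "0 \<le> t"
  shows "U t \<noteq> {}" and "\<exists>L. \<forall>x u. L \<le> l t x u"
proof -
  have "\<forall>t\<ge>0. U t \<noteq> {} \<and> closed (U t)"
    using assms(1) unfolding cond_h_def by (elim conjE) assumption
  then show "U t \<noteq> {}"
    using assms(2) by blast
  have "\<exists>lb. set_integrable lebesgue {0..} lb \<and> (\<forall>t\<ge>0. \<forall>x u. lb t \<le> l t x u)"
    using assms(1) unfolding cond_h_def by (elim conjE) assumption
  then show "\<exists>L. \<forall>x u. L \<le> l t x u"
    using assms(2) by blast
qed

lemma ext_fun_eq_ereal:
  assumes "0 \<le> t" and "x \<in> A" and "(t, x) \<in> edom (ext_fun A W)" and "W (t, x) \<noteq> - \<infinity>"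
  shows "ext_fun A W (t, x) = ereal (real_of_ereal (W (t, x)))"
  using assms by (cases "W (t, x)") (auto simp: ext_fun_def edom_def)

theorem proposition4p3:
  fixes A :: "'a::euclidean_space set"
    and H :: "real \<Rightarrow> 'a \<Rightarrow> 'a \<Rightarrow> real"
    and U :: "real \<Rightarrow> 'b::euclidean_space set"
    and f :: "real \<Rightarrow> 'a \<Rightarrow> 'b \<Rightarrow> 'a"
    and l :: "real \<Rightarrow> 'a \<Rightarrow> 'b \<Rightarrow> real"
    and W :: "real \<times> 'a \<Rightarrow> ereal"
  assumes "A \<noteq> {}" and "closed A"
    and "cond_h A U f l"
    and "\<forall>t\<ge>0. \<forall>x p. ereal (H t x p) = (SUP u\<in>U t. ereal (p \<bullet> f t x u - l t x u))"
    and "\<forall>t\<ge>0. \<forall>x\<in>A. W (t, x) \<noteq> - \<infinity>"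
  shows "weak_sol_I A H W \<longleftrightarrow> weak_sol_II A U f l W"
proof -
  have pointwise: "weak_sol_I_at P H (ext_fun A W) t x (real_of_ereal (W (t, x))) \<longleftrightarrow>
      weak_sol_II_at P U f l (ext_fun A W) t x (real_of_ereal (W (t, x)))"
    if "0 < t" "x \<in> A" "(t, x) \<in> edom (ext_fun A W)"
      and "\<And>s r. 0 < s \<Longrightarrow> P (ereal (s * r)) \<longleftrightarrow> P (ereal r)" for P t x
  proof -
    obtain L where "\<forall>x u. L \<le> l t x u"
      using cond_hD(2)[OF \<open>cond_h A U f l\<close>, of t] \<open>0 < t\<close> by auto
    with that assms show ?thesis
      by (intro weak_sol_I_at_iff_weak_sol_II_at ext_fun_eq_ereal cond_hD(1))
        (auto simp: representation_at_def)
  qed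
  have "frontier A \<subseteq> A"
    using \<open>closed A\<close> by (rule frontier_subset_closed)
  then show ?thesis
    unfolding weak_sol_I_iff_at weak_sol_II_iff_at full_measure_pos_def
    by (intro conj_cong refl ex_cong1 all_cong1 imp_cong pointwise)
      (auto simp: zero_le_mult_iff dest: interior_subset[THEN subsetD])
qed

end
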